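(* Let $\mathrm X$ be a locally compact Hausdorff space and $\kappa:\mathrm X\times\mathrm X\to(-\infty,\infty]$ a lower semicontinuous function which is nonnegative unless $\mathrm X\times\mathrm X$ is compact. Assume that $\kappa(x,y)$ is (finite and) continuous for $x\ne y$ and that $\kappa$ has the property $(\infty_{\mathrm X})$: for every $\varepsilon>0$ and every compact $K\subset\mathrm X$ there is a compact $K'\subset\mathrm X$ with $|\kappa(x,y)|<\varepsilon$ for all $x\in K$, $y\in\mathrm X\setminus K'$. Fix a closed set $F\subset\mathrm X$, a closed subset $Q$ of $\mathrm X\setminus F$, and $b\in(0,\infty)$. Then the map $(x,\nu)\mapsto\kappa(x,\nu)=\int\kappa(x,y)\,d\nu(y)$ is continuous on $Q\times\bigl(\mathfrak M^+_F\cap\mathfrak M_b\bigr)$ with respect to the product topology, where $Q$ carries the topology induced from $\mathrm X$ and $\mathfrak M^+_F\cap\mathfrak M_b$ the topology induced by the vague topology of $\mathfrak M$.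
   Context: $\mathfrak M$ is the space of real Radon measures on $\mathrm X$ with the vague topology (pointwise convergence on continuous compactly supported functions). $\mathfrak M^+_F$ is the set of nonnegative Radon measures concentrated on $F$ (for closed $F$: supported in $F$), and $\mathfrak M_b=\{\nu\in\mathfrak M:|\nu|(\mathrm X)\le b\}$. *)

theory Defs
  imports "HOL-Analysis.Analysis"
begin

definition borel_of :: "'a topology \<Rightarrow> 'a measure" where
  "borel_of X = sigma (topspace X) {U. openin X U}"

definition radon_measure :: "'a topology \<Rightarrow> 'a measure \<Rightarrow> bool" where
  "radon_measure X \<nu> \<longleftrightarrow>
     space \<nu> = topspace X \<and> sets \<nu> = sets (borel_of X) \<and>
     (\<forall>K. compactin X K \<longrightarrow> emeasure \<nu> K < \<infinity>) \<and>
     (\<forall>B\<in>sets \<nu>. emeasure \<nu> B = (INF U\<in>{U. openin X U \<and> B \<subseteq> U}. emeasure \<nu> U)) \<and>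
     (\<forall>U. openin X U \<longrightarrow> emeasure \<nu> U = (SUP K\<in>{K. compactin X K \<and> K \<subseteq> U}. emeasure \<nu> K))"

definition radon_pos_F_b :: "'a topology \<Rightarrow> 'a set \<Rightarrow> real \<Rightarrow> 'a measure set" where
  "radon_pos_F_b X F b = {\<nu>. radon_measure X \<nu> \<and> emeasure \<nu> (topspace X - F) = 0 \<and>
      emeasure \<nu> (space \<nu>) \<le> ennreal b}"

definition Cc :: "'a topology \<Rightarrow> ('a \<Rightarrow> real) set" where
  "Cc X = {f. continuous_map X euclideanreal f \<and>
              compactin X (X closure_of {x\<in>topspace X. f x \<noteq> 0})}"

definition vague_topology :: "'a topology \<Rightarrow> 'a measure set \<Rightarrow> 'a measure topology" where
  "vague_topology X M = pullback_topology M (\<lambda>\<nu>. \<lambda>f\<in>Cc X. integral\<^sup>L \<nu> f)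
      (product_topology (\<lambda>_. euclideanreal) (Cc X))"

definition potential :: "('a \<Rightarrow> 'a \<Rightarrow> ereal) \<Rightarrow> 'a \<Rightarrow> 'a measure \<Rightarrow> ereal" where
  "potential \<kappa> x \<nu> = enn2ereal (\<integral>\<^sup>+ y. e2ennreal (\<kappa> x y) \<partial>\<nu>)
                      - enn2ereal (\<integral>\<^sup>+ y. e2ennreal (- \<kappa> x y) \<partial>\<nu>)"

definition lsc_on :: "'a topology \<Rightarrow> ('a \<Rightarrow> ereal) \<Rightarrow> bool" where
  "lsc_on X f \<longleftrightarrow> (\<forall>c::real. openin X {z\<in>topspace X. ereal c < f z})"

end

theory Submission
  imports Defs
begin

text \<open>For \<open>x0 \<in> Q\<close> and \<open>\<epsilon> > 0\<close> there is a neighbourhood \<open>U\<close> of \<open>x0\<close> and one function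
  \<open>\<psi> \<in> C\<^sub>c(X)\<close> with \<open>|\<kappa>(x,y) - \<psi>(y)| \<le> \<epsilon>\<close> for all \<open>x \<in> U\<close>, \<open>y \<in> F\<close>: take \<open>\<psi>\<close> to be
  \<open>\<kappa>(x0,\<cdot>)\<close>, cut off near \<open>x0\<close> and soft-thresholded at level \<open>\<epsilon>\<close>; property \<open>(\<infinity>\<^sub>X)\<close> gives
  compact support and controls the kernel outside a compact set, and joint continuity off the
  diagonal gives uniform closeness on the remaining compact part of \<open>F\<close>. Since the measures are
  carried by \<open>F\<close> and have mass at most \<open>b\<close>, the potential \<open>\<kappa>(x,\<nu>)\<close> is within \<open>\<epsilon> b\<close> of
  \<open>\<integral>\<psi> d\<nu>\<close> for all \<open>x \<in> U\<close>, and \<open>\<nu> \<mapsto> \<integral>\<psi> d\<nu>\<close> is vaguely continuous; a locally uniform limit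
  of continuous functions is continuous.\<close>

lemma space_borel_of: "space (borel_of X) = topspace X"
  unfolding borel_of_def by (simp add: space_measure_of_conv openin_subset subset_iff)

lemma sets_borel_of: "sets (borel_of X) = sigma_sets (topspace X) {U. openin X U}"
  unfolding borel_of_def by (rule sets_measure_of) (auto dest: openin_subset)

lemma borel_of_open: "openin X U \<Longrightarrow> U \<in> sets (borel_of X)"
  by (simp add: sets_borel_of)

lemma borel_of_closed: "closedin X C \<Longrightarrow> C \<in> sets (borel_of X)"
  by (metis Diff_Diff_Int borel_of_open closedin_def inf.absorb2 sets.compl_sets space_borel_of)

lemma borel_measurable_borel_of:
  assumes "continuous_map X euclideanreal h"
  shows "h \<in> borel_measurable (borel_of X)"
proof (rule borel_measurableI)
  fix S :: "real set" assume "open S"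
  then have "openin X {y \<in> topspace X. h y \<in> S}"
    using assms by (intro openin_continuous_map_preimage) auto
  moreover have "h -` S \<inter> space (borel_of X) = {y \<in> topspace X. h y \<in> S}"
    by (auto simp: space_borel_of)
  ultimately show "h -` S \<inter> space (borel_of X) \<in> sets (borel_of X)"
    by (simp add: borel_of_open)
qed

lemma borel_measurable_borel_of_if_closedin:
  assumes F: "closedin X F" and h: "continuous_map (subtopology X F) euclideanreal h"
  shows "(\<lambda>y. if y \<in> F then h y else 0) \<in> borel_measurable (borel_of X)"
proof (rule borel_measurableI)
  fix S :: "real set" assume "open S"
  then have "openin (subtopology X F) {y \<in> topspace (subtopology X F). h y \<in> S}"
    using h by (intro openin_continuous_map_preimage) auto
  then obtain W where W: "openin X W" "{y \<in> topspace (subtopology X F). h y \<in> S} = W \<inter> F"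
    unfolding openin_subtopology by blast
  have FX: "F \<subseteq> topspace X" using F closedin_subset by blast
  define R where "R = (if 0 \<in> S then topspace X - F else {})"
  have "(\<lambda>y. if y \<in> F then h y else 0) -` S \<inter> space (borel_of X) = (W \<inter> F) \<union> R"
    using W(2) FX by (auto simp: space_borel_of R_def set_eq_iff)
  moreover have "W \<inter> F \<in> sets (borel_of X)"
    using W(1) F by (intro sets.Int borel_of_open borel_of_closed)
  moreover have "R \<in> sets (borel_of X)"
    using F by (simp add: R_def borel_of_open closedin_def)
  ultimately show "(\<lambda>y. if y \<in> F then h y else 0) -` S \<inter> space (borel_of X) \<in> sets (borel_of X)"
    by simp
qed

lemma radon_pos_F_bD:
  assumes "\<nu> \<in> radon_pos_F_b X F b" and F: "closedin X F" and b: "0 \<le> b"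
  shows "finite_measure \<nu>" "sets \<nu> = sets (borel_of X)" "space \<nu> = topspace X"
    and "AE y in \<nu>. y \<in> F" and "measure \<nu> (space \<nu>) \<le> b"
proof -
  have r: "radon_measure X \<nu>" "emeasure \<nu> (topspace X - F) = 0" "emeasure \<nu> (space \<nu>) \<le> ennreal b"
    using assms(1) by (auto simp: radon_pos_F_b_def)
  show sp: "space \<nu> = topspace X" "sets \<nu> = sets (borel_of X)"
    using r(1) by (auto simp: radon_measure_def)
  show fin: "finite_measure \<nu>"
    by (rule finite_measureI) (use r(3) in \<open>auto simp: top_unique\<close>)
  have "topspace X - F \<in> sets \<nu>"
    using sp F by (simp add: borel_of_open closedin_def)
  then show "AE y in \<nu>. y \<in> F"
    by (intro AE_I'[of "topspace X - F"]) (auto simp: r(2) sp)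
  show "measure \<nu> (space \<nu>) \<le> b"
    using r(3) b fin by (simp add: finite_measure.emeasure_eq_measure)
qed

lemma topspace_vague_topology: "topspace (vague_topology X M) = M"
  unfolding vague_topology_def topspace_pullback_topology
  by (auto simp: topspace_product_topology)

lemma continuous_map_vague_integral:
  assumes "f \<in> Cc X"
  shows "continuous_map (vague_topology X M) euclideanreal (\<lambda>\<nu>. integral\<^sup>L \<nu> f)"
proof -
  have "continuous_map (vague_topology X M) euclideanreal
          ((\<lambda>z. z f) \<circ> (\<lambda>\<nu>. \<lambda>f\<in>Cc X. integral\<^sup>L \<nu> f))"
    unfolding vague_topology_def
    using assms by (intro continuous_map_pullback continuous_map_product_projection)
  then show ?thesis using assms by (simp add: o_def)
qed

lemma Cc_bounded:
  assumes "f \<in> Cc X"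
  obtains B where "\<And>y. y \<in> topspace X \<Longrightarrow> \<bar>f y\<bar> \<le> B"
proof -
  define C where "C = X closure_of {x \<in> topspace X. f x \<noteq> 0}"
  have f: "continuous_map X euclideanreal f" and C: "compactin X C"
    using assms by (auto simp: Cc_def C_def)
  then have "compact (f ` C)"
    using image_compactin compactin_euclidean_iff by blast
  then obtain B where B: "\<And>v. v \<in> f ` C \<Longrightarrow> \<bar>v\<bar> \<le> B"
    using compact_imp_bounded bounded_real by metis
  have "\<bar>f y\<bar> \<le> max B 0" if "y \<in> topspace X" for y
  proof (cases "y \<in> C")
    case False
    then have "f y = 0"
      using that closure_of_subset[of "{x \<in> topspace X. f x \<noteq> 0}" X] by (auto simp: C_def)
    then show ?thesis by simp
  qed (use B in force)
  then show thesis by (rule that)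
qed

lemma tube_lemma_uniform:
  fixes f :: "'a \<times> 'b \<Rightarrow> real"
  assumes cont: "continuous_map (subtopology (prod_topology X Y) S) euclideanreal f"
    and x0: "x0 \<in> V" and V: "openin X V" and C: "compactin Y C"
    and VC: "V \<times> C \<subseteq> S" and d: "\<delta> > 0"
  obtains U where "openin X U" "x0 \<in> U" "U \<subseteq> V"
    "\<And>x y. x \<in> U \<Longrightarrow> y \<in> C \<Longrightarrow> \<bar>f (x, y) - f (x0, y)\<bar> < \<delta>"
proof -
  have x0X: "x0 \<in> topspace X" using V x0 openin_subset by blast
  have CY: "C \<subseteq> topspace Y" using C compactin_subset_topspace by blast
  have "\<exists>A B. openin X A \<and> openin Y B \<and> x0 \<in> A \<and> y \<in> B \<and>
       (\<forall>x\<in>A. \<forall>y'\<in>B. (x, y') \<in> S \<longrightarrow> \<bar>f (x, y') - f (x0, y)\<bar> < \<delta>/2)" if y: "y \<in> C" for y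
  proof -
    have "openin (subtopology (prod_topology X Y) S)
            {z \<in> topspace (subtopology (prod_topology X Y) S). f z \<in> ball (f (x0, y)) (\<delta>/2)}"
      by (rule openin_continuous_map_preimage[OF cont]) simp
    then obtain W where W: "openin (prod_topology X Y) W"
      and Weq: "{z \<in> topspace (subtopology (prod_topology X Y) S). f z \<in> ball (f (x0, y)) (\<delta>/2)} = W \<inter> S"
      unfolding openin_subtopology by blast
    have "(x0, y) \<in> S" using VC x0 y by blast
    then have "(x0, y) \<in> {z \<in> topspace (subtopology (prod_topology X Y) S). f z \<in> ball (f (x0, y)) (\<delta>/2)}"
      using x0X CY y d by auto
    then have "(x0, y) \<in> W" using Weq by blast
    then obtain A B where AB: "openin X A" "openin Y B" "x0 \<in> A" "y \<in> B" "A \<times> B \<subseteq> W"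
      using W by (metis openin_prod_topology_alt)
    have "\<bar>f (x, y') - f (x0, y)\<bar> < \<delta>/2" if "x \<in> A" "y' \<in> B" "(x, y') \<in> S" for x y'
    proof -
      have "(x, y') \<in> W \<inter> S" using that AB by auto
      then have "f (x, y') \<in> ball (f (x0, y)) (\<delta>/2)" using Weq by blast
      then show ?thesis by (simp add: dist_real_def abs_minus_commute)
    qed
    then show ?thesis using AB by blast
  qed
  then obtain A B where AB: "\<And>y. y \<in> C \<Longrightarrow> openin X (A y) \<and> openin Y (B y) \<and> x0 \<in> A y \<and> y \<in> B y \<and>
       (\<forall>x\<in>A y. \<forall>y'\<in>B y. (x, y') \<in> S \<longrightarrow> \<bar>f (x, y') - f (x0, y)\<bar> < \<delta>/2)"
    by metis
  have "\<exists>\<F>. finite \<F> \<and> \<F> \<subseteq> B ` C \<and> C \<subseteq> \<Union>\<F>"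
    using C AB unfolding compactin_def by (metis (no_types, lifting) UN_I imageE subsetI)
  then obtain T where T: "T \<subseteq> C" "finite T" "C \<subseteq> \<Union>(B ` T)"
    by (metis finite_subset_image)
  define U where "U = V \<inter> \<Inter>(A ` T)"
  have "\<bar>f (x, y') - f (x0, y')\<bar> < \<delta>" if "x \<in> U" "y' \<in> C" for x y'
  proof -
    obtain y where y: "y \<in> T" "y' \<in> B y" using T(3) \<open>y' \<in> C\<close> by blast
    have "y \<in> C" "x \<in> A y" "(x, y') \<in> S" "(x0, y') \<in> S"
      using y T that VC x0 unfolding U_def by auto
    then have "\<bar>f (x, y') - f (x0, y)\<bar> < \<delta>/2" "\<bar>f (x0, y') - f (x0, y)\<bar> < \<delta>/2"
      using AB[of y] y by auto
    then show ?thesis by linarith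
  qed
  moreover have "openin X U" unfolding U_def using T AB V by (intro openin_Int_Inter) auto
  moreover have "x0 \<in> U" using T AB x0 unfolding U_def by auto
  moreover have "U \<subseteq> V" unfolding U_def by blast
  ultimately show thesis using that by blast
qed

definition soft_threshold :: "real \<Rightarrow> real \<Rightarrow> real" where
  "soft_threshold e t = t - max (- e) (min e t)"

lemma soft_threshold_eq_0: "\<bar>t\<bar> \<le> e \<Longrightarrow> soft_threshold e t = 0"
  by (auto simp: soft_threshold_def)

lemma abs_diff_soft_threshold_le: "0 \<le> e \<Longrightarrow> \<bar>t - soft_threshold e t\<bar> \<le> e"
  by (auto simp: soft_threshold_def)

lemma continuous_map_soft_threshold: "continuous_map euclideanreal euclideanreal (soft_threshold e)"
  unfolding soft_threshold_def[abs_def] by (simp add: continuous_intros)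

text \<open>A cutoff that vanishes near \<open>x0\<close> and equals 1 on \<open>F\<close> removes the singularity of
  \<open>h\<close> at \<open>x0\<close>, and the soft threshold makes the support lie in \<open>K\<close>.\<close>
lemma exists_Cc_eq_soft_threshold:
  fixes h :: "'a \<Rightarrow> real"
  assumes haus: "Hausdorff_space X" and cr: "completely_regular_space X"
    and F: "closedin X F" and x0: "x0 \<in> topspace X" "x0 \<notin> F"
    and h: "continuous_map (subtopology X (topspace X - {x0})) euclideanreal h"
    and K: "compactin X K" and small: "\<And>y. y \<in> topspace X - K \<Longrightarrow> \<bar>h y\<bar> \<le> e"
  obtains \<psi> where "\<psi> \<in> Cc X" "\<And>y. y \<in> F \<Longrightarrow> \<psi> y = soft_threshold e (h y)"
proof -
  obtain \<phi> :: "'a \<Rightarrow> real" where \<phi>: "continuous_map X (top_of_set {0..1}) \<phi>" "\<phi> x0 = 0" "\<phi> ` F \<subseteq> {1}"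
    using cr F x0 unfolding completely_regular_space_def by blast
  have \<phi>c: "continuous_map X euclideanreal \<phi>"
    using \<phi>(1) continuous_map_into_fulltopology by blast
  define \<psi> where "\<psi> y = (if \<phi> y \<le> 1/2 then 0 else (2 * \<phi> y - 1) * soft_threshold e (h y))" for y
  have "continuous_map (subtopology X {y \<in> topspace X. 1/2 \<le> \<phi> y}) euclideanreal
          (\<lambda>y. (2 * \<phi> y - 1) * soft_threshold e (h y))"
  proof -
    have "continuous_map (subtopology X {y \<in> topspace X. 1/2 \<le> \<phi> y}) euclideanreal h"
      using \<phi>(2) by (intro continuous_map_from_subtopology_mono[OF h]) auto
    then have "continuous_map (subtopology X {y \<in> topspace X. 1/2 \<le> \<phi> y}) euclideanreal
        (\<lambda>y. soft_threshold e (h y))"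
      using continuous_map_compose[OF _ continuous_map_soft_threshold] by (simp add: o_def)
    moreover have "continuous_map (subtopology X {y \<in> topspace X. 1/2 \<le> \<phi> y}) euclideanreal \<phi>"
      using \<phi>c by (rule continuous_map_from_subtopology)
    ultimately show ?thesis
      by (intro continuous_map_real_mult continuous_map_diff) auto
  qed
  then have "continuous_map X euclideanreal \<psi>"
    unfolding \<psi>_def[abs_def] using \<phi>c
    by (intro continuous_map_cases_le) auto
  moreover have "{y \<in> topspace X. \<psi> y \<noteq> 0} \<subseteq> K"
  proof (rule subsetI, rule ccontr)
    fix y assume "y \<in> {y \<in> topspace X. \<psi> y \<noteq> 0}" "y \<notin> K"
    then have "soft_threshold e (h y) = 0" using small soft_threshold_eq_0 by blast
    then show False using \<open>y \<in> {y \<in> topspace X. \<psi> y \<noteq> 0}\<close> by (auto simp: \<psi>_def split: if_splits)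
  qed
  then have "compactin X (X closure_of {y \<in> topspace X. \<psi> y \<noteq> 0})"
    by (rule closed_compactin[OF K closure_of_minimal[OF _ compactin_imp_closedin[OF haus K]]])
      simp_all
  ultimately have "\<psi> \<in> Cc X" by (simp add: Cc_def)
  moreover have "\<psi> y = soft_threshold e (h y)" if "y \<in> F" for y
    using \<phi>(3) that by (auto simp: \<psi>_def)
  ultimately show thesis using that by blast
qed

lemma kernel_section_continuous:
  fixes r :: "'a \<Rightarrow> 'a \<Rightarrow> real"
  assumes cont: "continuous_map (subtopology (prod_topology X X) {(x, y). x \<noteq> y}) euclideanreal
                   (\<lambda>(x, y). r x y)"
    and x: "x \<in> topspace X" "x \<notin> S"
  shows "continuous_map (subtopology X S) euclideanreal (r x)"
proof -
  have "continuous_map (subtopology X S) (subtopology (prod_topology X X) {(x, y). x \<noteq> y}) (\<lambda>y. (x, y))"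
    unfolding continuous_map_in_subtopology
    using x by (auto intro!: continuous_map_pairedI continuous_map_from_subtopology[OF continuous_map_id])
  from continuous_map_compose[OF this cont] show ?thesis by (simp add: o_def)
qed

lemma real_of_ereal_kernel_decay:
  fixes \<kappa> :: "'a \<Rightarrow> 'a \<Rightarrow> ereal"
  assumes "\<forall>\<epsilon>>0. \<forall>K. compactin X K \<longrightarrow>
      (\<exists>K'. compactin X K' \<and> (\<forall>x\<in>K. \<forall>y\<in>topspace X - K'. \<bar>\<kappa> x y\<bar> < ereal \<epsilon>))"
  shows "\<forall>\<epsilon>>0. \<forall>K. compactin X K \<longrightarrow>
      (\<exists>K'. compactin X K' \<and> (\<forall>x\<in>K. \<forall>y\<in>topspace X - K'. \<bar>real_of_ereal (\<kappa> x y)\<bar> < \<epsilon>))"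
proof -
  have "\<bar>real_of_ereal a\<bar> < \<epsilon>" if "\<bar>a\<bar> < ereal \<epsilon>" for a :: ereal and \<epsilon>
    using that by (cases a) auto
  then show ?thesis using assms by meson
qed

lemma kernel_uniform_approx_by_Cc:
  fixes r :: "'a \<Rightarrow> 'a \<Rightarrow> real"
  assumes lc: "locally_compact_space X" and haus: "Hausdorff_space X"
    and cont: "continuous_map (subtopology (prod_topology X X) {(x, y). x \<noteq> y}) euclideanreal
                 (\<lambda>(x, y). r x y)"
    and decay: "\<forall>K. compactin X K \<longrightarrow>
                  (\<exists>K'. compactin X K' \<and> (\<forall>x\<in>K. \<forall>y\<in>topspace X - K'. \<bar>r x y\<bar> < e))"
    and F: "closedin X F" and x0: "x0 \<in> topspace X" "x0 \<notin> F" and e: "0 < e"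
  obtains U \<psi> where "openin X U" "x0 \<in> U" "U \<inter> F = {}" "\<psi> \<in> Cc X"
    "\<And>x y. x \<in> U \<Longrightarrow> y \<in> F \<Longrightarrow> \<bar>r x y - \<psi> y\<bar> \<le> 2 * e"
proof -
  have "neighbourhood_base_of (\<lambda>C. compactin X C \<and> closedin X C) X"
    using lc haus locally_compact_Hausdorff_imp_regular_space
      locally_compact_regular_space_neighbourhood_base by blast
  moreover have "openin X (topspace X - F)" using F by (simp add: closedin_def)
  ultimately obtain V K where VK: "openin X V" "compactin X K" "x0 \<in> V" "V \<subseteq> K" "K \<subseteq> topspace X - F"
    using x0 unfolding neighbourhood_base_of by (metis DiffI)
  obtain K' where K': "compactin X K'" "\<And>x y. x \<in> K \<Longrightarrow> y \<in> topspace X - K' \<Longrightarrow> \<bar>r x y\<bar> < e"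
    using decay VK(2) by blast
  have "completely_regular_space X"
    using lc haus by (intro locally_compact_regular_imp_completely_regular_space) auto
  moreover have "continuous_map (subtopology X (topspace X - {x0})) euclideanreal (r x0)"
    using x0 by (intro kernel_section_continuous[OF cont]) auto
  moreover have "\<bar>r x0 y\<bar> \<le> e" if "y \<in> topspace X - K'" for y
    using K'(2)[OF _ that] VK by force
  ultimately obtain \<psi> where \<psi>: "\<psi> \<in> Cc X" "\<And>y. y \<in> F \<Longrightarrow> \<psi> y = soft_threshold e (r x0 y)"
    using exists_Cc_eq_soft_threshold[OF haus _ F x0 _ K'(1)] by blast
  have "V \<times> (K' \<inter> F) \<subseteq> {(x, y). x \<noteq> y}" using VK by blast
  then obtain U where U: "openin X U" "x0 \<in> U" "U \<subseteq> V"
    "\<And>x y. x \<in> U \<Longrightarrow> y \<in> K' \<inter> F \<Longrightarrow> \<bar>r x y - r x0 y\<bar> < e"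
    using tube_lemma_uniform[OF cont VK(3,1) compact_Int_closedin[OF K'(1) F] _ e] by auto
  have "\<bar>r x y - \<psi> y\<bar> \<le> 2 * e" if x: "x \<in> U" and y: "y \<in> F" for x y
  proof (cases "y \<in> K'")
    case True
    then show ?thesis
      using U(4)[OF x] y abs_diff_soft_threshold_le[of e "r x0 y"] e \<psi>(2)[OF y] by fastforce
  next
    case False
    then have "\<bar>r x y\<bar> < e" "\<bar>r x0 y\<bar> < e"
      using K'(2) x U(2,3) VK(4) y F closedin_subset by blast+
    then show ?thesis using soft_threshold_eq_0 \<psi>(2)[OF y] by simp
  qed
  moreover have "U \<inter> F = {}" using U(3) VK(4,5) by blast
  ultimately show thesis using that U(1,2) \<psi>(1) by blast
qed

lemma integral_close_AE:
  assumes fin: "finite_measure \<nu>" and f: "f \<in> borel_measurable \<nu>" and g: "integrable \<nu> g"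
    and close: "AE y in \<nu>. \<bar>f y - g y\<bar> \<le> c"
  shows "integrable \<nu> f" "\<bar>integral\<^sup>L \<nu> f - integral\<^sup>L \<nu> g\<bar> \<le> c * measure \<nu> (space \<nu>)"
proof -
  interpret finite_measure \<nu> by (rule fin)
  have d: "integrable \<nu> (\<lambda>y. f y - g y)"
    using close g by (intro integrable_const_bound[where B = c] borel_measurable_diff f) auto
  then have "integrable \<nu> (\<lambda>y. (f y - g y) + g y)" using g by (rule Bochner_Integration.integrable_add)
  then show fi: "integrable \<nu> f" by simp
  have "\<bar>integral\<^sup>L \<nu> f - integral\<^sup>L \<nu> g\<bar> = \<bar>integral\<^sup>L \<nu> (\<lambda>y. f y - g y)\<bar>"
    using fi g by simp
  also have "\<dots> \<le> integral\<^sup>L \<nu> (\<lambda>y. \<bar>f y - g y\<bar>)" by (rule integral_abs_bound)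
  also have "\<dots> \<le> integral\<^sup>L \<nu> (\<lambda>y. c)"
    using d close by (intro integral_mono_AE) auto
  also have "\<dots> = c * measure \<nu> (space \<nu>)" by simp
  finally show "\<bar>integral\<^sup>L \<nu> f - integral\<^sup>L \<nu> g\<bar> \<le> c * measure \<nu> (space \<nu>)" .
qed

lemma potential_eq_integral:
  fixes k :: "'a \<Rightarrow> real"
  assumes ae: "AE y in \<nu>. \<kappa> x y = ereal (k y)" and int: "integrable \<nu> k"
  shows "potential \<kappa> x \<nu> = ereal (integral\<^sup>L \<nu> k)"
proof -
  have e1: "(\<integral>\<^sup>+ y. e2ennreal (\<kappa> x y) \<partial>\<nu>) = (\<integral>\<^sup>+ y. ennreal (k y) \<partial>\<nu>)"
    by (rule nn_integral_cong_AE) (use ae in auto)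
  have e2: "(\<integral>\<^sup>+ y. e2ennreal (- \<kappa> x y) \<partial>\<nu>) = (\<integral>\<^sup>+ y. ennreal (- k y) \<partial>\<nu>)"
    by (rule nn_integral_cong_AE) (use ae in auto)
  have fin: "(\<integral>\<^sup>+ y. ennreal (norm (k y)) \<partial>\<nu>) < \<infinity>"
    using int by (simp add: integrable_iff_bounded)
  have "(\<integral>\<^sup>+ y. ennreal (k y) \<partial>\<nu>) < \<infinity>" "(\<integral>\<^sup>+ y. ennreal (- k y) \<partial>\<nu>) < \<infinity>"
    by (rule le_less_trans[OF nn_integral_mono fin]; auto intro: ennreal_leI)+
  moreover have "enn2ereal a = ereal (enn2real a)" if "a < \<infinity>" for a :: ennreal
    using that by (cases a) (auto simp: enn2real_def)
  ultimately show ?thesis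
    unfolding potential_def e1 e2 real_lebesgue_integral_def[OF int] by simp
qed

lemma potential_eq_integral_on:
  assumes ae: "AE y in \<nu>. y \<in> F" and finite: "\<And>y. y \<in> F \<Longrightarrow> \<bar>\<kappa> x y\<bar> \<noteq> \<infinity>"
    and int: "integrable \<nu> (\<lambda>y. if y \<in> F then real_of_ereal (\<kappa> x y) else 0)"
  shows "potential \<kappa> x \<nu> = ereal (integral\<^sup>L \<nu> (\<lambda>y. if y \<in> F then real_of_ereal (\<kappa> x y) else 0))"
proof (rule potential_eq_integral[OF _ int])
  show "AE y in \<nu>. \<kappa> x y = ereal (if y \<in> F then real_of_ereal (\<kappa> x y) else 0)"
    using ae by eventually_elim (simp add: finite ereal_real')
qed

lemma continuous_map_real_locally_uniform_approx:
  fixes g :: "'a \<Rightarrow> real"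
  assumes approx: "\<And>z0 \<epsilon>. z0 \<in> topspace Z \<Longrightarrow> \<epsilon> > 0 \<Longrightarrow>
      \<exists>U h. openin Z U \<and> z0 \<in> U \<and> continuous_map Z euclideanreal h \<and> (\<forall>z\<in>U. \<bar>g z - h z\<bar> \<le> \<epsilon>)"
  shows "continuous_map Z euclideanreal g"
proof -
  have "continuous_map Z Met_TC.mtopology g"
    unfolding Met_TC.continuous_map_to_metric
  proof (intro ballI allI impI)
    fix z0 and \<epsilon> :: real
    assume z0: "z0 \<in> topspace Z" and \<epsilon>: "\<epsilon> > 0"
    then obtain U h where U: "openin Z U" "z0 \<in> U" and h: "continuous_map Z euclideanreal h"
      and gh: "\<forall>z\<in>U. \<bar>g z - h z\<bar> \<le> \<epsilon>/3"
      using approx[of z0 "\<epsilon>/3"] by auto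
    from h have "continuous_map Z Met_TC.mtopology h" by simp
    then obtain W where W: "openin Z W" "z0 \<in> W" "\<forall>z\<in>W. h z \<in> Met_TC.mball (h z0) (\<epsilon>/3)"
      using z0 \<epsilon> unfolding Met_TC.continuous_map_to_metric by (meson divide_pos_pos zero_less_numeral)
    have "g z \<in> Met_TC.mball (g z0) \<epsilon>" if "z \<in> U \<inter> W" for z
    proof -
      have "\<bar>g z - h z\<bar> \<le> \<epsilon>/3" "\<bar>g z0 - h z0\<bar> \<le> \<epsilon>/3" "\<bar>h z0 - h z\<bar> < \<epsilon>/3"
        using that gh U(2) W(3) by (auto simp: dist_real_def)
      then have "\<bar>g z0 - g z\<bar> < \<epsilon>" unfolding abs_le_iff abs_less_iff by linarith
      then show ?thesis by (simp add: dist_real_def)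
    qed
    then show "\<exists>U. openin Z U \<and> z0 \<in> U \<and> (\<forall>z\<in>U. g z \<in> Met_TC.mball (g z0) \<epsilon>)"
      using U W by (intro exI[of _ "U \<inter> W"]) auto
  qed
  then show ?thesis by simp
qed

lemma integrable_Cc:
  assumes "\<psi> \<in> Cc X" "finite_measure \<nu>" "sets \<nu> = sets (borel_of X)" "space \<nu> = topspace X"
  shows "integrable \<nu> \<psi>"
proof -
  interpret finite_measure \<nu> by fact
  obtain B where B: "\<And>y. y \<in> topspace X \<Longrightarrow> \<bar>\<psi> y\<bar> \<le> B"
    using Cc_bounded[OF assms(1)] by blast
  have "\<psi> \<in> borel_measurable (borel_of X)"
    using assms(1) by (intro borel_measurable_borel_of) (simp add: Cc_def)
  then have "\<psi> \<in> borel_measurable \<nu>"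
    using assms(3) measurable_cong_sets by blast
  then show ?thesis
    using B assms(4) by (intro integrable_const_bound[where B = B]) auto
qed

lemma integral_kernel_approx_by_Cc:
  fixes r :: "'a \<Rightarrow> 'a \<Rightarrow> real"
  assumes lc: "locally_compact_space X" and haus: "Hausdorff_space X"
    and cont: "continuous_map (subtopology (prod_topology X X) {(x, y). x \<noteq> y}) euclideanreal
                 (\<lambda>(x, y). r x y)"
    and decay: "\<forall>e>0. \<forall>K. compactin X K \<longrightarrow>
                  (\<exists>K'. compactin X K' \<and> (\<forall>x\<in>K. \<forall>y\<in>topspace X - K'. \<bar>r x y\<bar> < e))"
    and F: "closedin X F" and x0: "x0 \<in> topspace X" "x0 \<notin> F" and \<epsilon>: "0 < \<epsilon>" and b: "0 < b"
  obtains U \<psi> where "openin X U" "x0 \<in> U" "\<psi> \<in> Cc X"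
    "\<And>x \<nu>. x \<in> U \<Longrightarrow> \<nu> \<in> radon_pos_F_b X F b \<Longrightarrow>
       integrable \<nu> (\<lambda>y. if y \<in> F then r x y else 0) \<and>
       \<bar>integral\<^sup>L \<nu> (\<lambda>y. if y \<in> F then r x y else 0) - integral\<^sup>L \<nu> \<psi>\<bar> \<le> \<epsilon>"
proof -
  define e where "e = \<epsilon> / (2 * b)"
  have e: "0 < e" "2 * e * b = \<epsilon>" using \<epsilon> b by (auto simp: e_def)
  have "\<forall>K. compactin X K \<longrightarrow>
      (\<exists>K'. compactin X K' \<and> (\<forall>x\<in>K. \<forall>y\<in>topspace X - K'. \<bar>r x y\<bar> < e))"
    using mp[OF spec[OF decay, of e] e(1)] .
  then obtain U \<psi> where U: "openin X U" "x0 \<in> U" "U \<inter> F = {}" "\<psi> \<in> Cc X"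
    and close: "\<And>x y. x \<in> U \<Longrightarrow> y \<in> F \<Longrightarrow> \<bar>r x y - \<psi> y\<bar> \<le> 2 * e"
    by (rule kernel_uniform_approx_by_Cc[OF lc haus cont _ F x0 e(1)]) (rule that)
  have "integrable \<nu> (\<lambda>y. if y \<in> F then r x y else 0) \<and>
      \<bar>integral\<^sup>L \<nu> (\<lambda>y. if y \<in> F then r x y else 0) - integral\<^sup>L \<nu> \<psi>\<bar> \<le> \<epsilon>"
    if x: "x \<in> U" and \<nu>: "\<nu> \<in> radon_pos_F_b X F b" for x \<nu>
  proof -
    note \<nu>facts = radon_pos_F_bD[OF \<nu> F less_imp_le[OF b]]
    have "x \<in> topspace X" "x \<notin> F" using x U(1,3) openin_subset by blast+
    then have "continuous_map (subtopology X F) euclideanreal (r x)"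
      by (intro kernel_section_continuous[OF cont])
    then have "(\<lambda>y. if y \<in> F then r x y else 0) \<in> borel_measurable \<nu>"
      using borel_measurable_borel_of_if_closedin[OF F] \<nu>facts(2) measurable_cong_sets by blast
    moreover have "AE y in \<nu>. \<bar>(if y \<in> F then r x y else 0) - \<psi> y\<bar> \<le> 2 * e"
      using \<nu>facts(4) by eventually_elim (use close[OF x] in simp)
    moreover have "2 * e * measure \<nu> (space \<nu>) \<le> \<epsilon>"
      using \<nu>facts(5) e by (metis mult_left_mono less_eq_real_def mult_pos_pos zero_less_numeral)
    ultimately show ?thesis
      using integral_close_AE[OF \<nu>facts(1) _ integrable_Cc[OF U(4) \<nu>facts(1-3)]] by fastforce
  qed
  then show thesis using that U(1,2,4) by blast
qed

lemma continuous_map_integral_kernel: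
  fixes r :: "'a \<Rightarrow> 'a \<Rightarrow> real"
  assumes lc: "locally_compact_space X" and haus: "Hausdorff_space X"
    and cont: "continuous_map (subtopology (prod_topology X X) {(x, y). x \<noteq> y}) euclideanreal
                 (\<lambda>(x, y). r x y)"
    and decay: "\<forall>e>0. \<forall>K. compactin X K \<longrightarrow>
                  (\<exists>K'. compactin X K' \<and> (\<forall>x\<in>K. \<forall>y\<in>topspace X - K'. \<bar>r x y\<bar> < e))"
    and F: "closedin X F" and Q: "Q \<subseteq> topspace X - F" and b: "0 < b"
  shows "continuous_map (prod_topology (subtopology X Q) (vague_topology X (radon_pos_F_b X F b)))
           euclideanreal (\<lambda>(x, \<nu>). integral\<^sup>L \<nu> (\<lambda>y. if y \<in> F then r x y else 0))"
    (is "continuous_map ?Z _ ?g")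
proof (rule continuous_map_real_locally_uniform_approx)
  fix z0 and \<epsilon> :: real
  assume "z0 \<in> topspace ?Z" "0 < \<epsilon>"
  then obtain x0 \<nu>0 where z0: "z0 = (x0, \<nu>0)" "x0 \<in> Q" "\<nu>0 \<in> radon_pos_F_b X F b"
    using Q by (auto simp: topspace_vague_topology)
  have x0: "x0 \<in> topspace X" "x0 \<notin> F" using z0(2) Q by blast+
  obtain U \<psi> where U: "openin X U" "x0 \<in> U" "\<psi> \<in> Cc X"
    and close: "\<And>x \<nu>. x \<in> U \<Longrightarrow> \<nu> \<in> radon_pos_F_b X F b \<Longrightarrow>
       integrable \<nu> (\<lambda>y. if y \<in> F then r x y else 0) \<and>
       \<bar>integral\<^sup>L \<nu> (\<lambda>y. if y \<in> F then r x y else 0) - integral\<^sup>L \<nu> \<psi>\<bar> \<le> \<epsilon>"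
    by (rule integral_kernel_approx_by_Cc[OF lc haus cont decay F x0 \<open>0 < \<epsilon>\<close> b]) (rule that)
  have "openin ?Z ((Q \<inter> U) \<times> radon_pos_F_b X F b)"
    using openin_subtopology_Int2[OF U(1)] openin_topspace[of "vague_topology X (radon_pos_F_b X F b)"]
    unfolding openin_prod_Times_iff topspace_vague_topology by blast
  moreover have "continuous_map ?Z euclideanreal (\<lambda>z. integral\<^sup>L (snd z) \<psi>)"
    using continuous_map_compose[OF continuous_map_snd continuous_map_vague_integral[OF U(3)]]
    by (simp add: o_def)
  moreover have "\<forall>z \<in> (Q \<inter> U) \<times> radon_pos_F_b X F b. \<bar>?g z - integral\<^sup>L (snd z) \<psi>\<bar> \<le> \<epsilon>"
    using close by auto
  ultimately show "\<exists>U h. openin ?Z U \<and> z0 \<in> U \<and> continuous_map ?Z euclideanreal h \<and>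
      (\<forall>z\<in>U. \<bar>?g z - h z\<bar> \<le> \<epsilon>)"
    using z0 U(2) by blast
qed

theorem lemma3p5:
  fixes X :: "'a topology" and \<kappa> :: "'a \<Rightarrow> 'a \<Rightarrow> ereal"
    and F Q :: "'a set" and b :: real
  assumes lc: "locally_compact_space X" and haus: "Hausdorff_space X"
    and no_minf: "\<forall>x\<in>topspace X. \<forall>y\<in>topspace X. \<kappa> x y \<noteq> -\<infinity>"
    and lsc: "lsc_on (prod_topology X X) (\<lambda>(x, y). \<kappa> x y)"
    and nonneg: "\<not> compact_space (prod_topology X X) \<longrightarrow>
                   (\<forall>x\<in>topspace X. \<forall>y\<in>topspace X. \<kappa> x y \<ge> 0)"
    and finite_off: "\<forall>x\<in>topspace X. \<forall>y\<in>topspace X. x \<noteq> y \<longrightarrow> \<bar>\<kappa> x y\<bar> \<noteq> \<infinity>"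
    and cont_off: "continuous_map
        (subtopology (prod_topology X X) {(x, y). x \<noteq> y}) euclideanreal
        (\<lambda>(x, y). real_of_ereal (\<kappa> x y))"
    and inf_X: "\<forall>\<epsilon>>0. \<forall>K. compactin X K \<longrightarrow>
        (\<exists>K'. compactin X K' \<and>
           (\<forall>x\<in>K. \<forall>y\<in>topspace X - K'. \<bar>\<kappa> x y\<bar> < ereal \<epsilon>))"
    and F: "closedin X F"
    and Q: "closedin X Q" "Q \<subseteq> topspace X - F"
    and b: "0 < b"
  shows "continuous_map
           (prod_topology (subtopology X Q) (vague_topology X (radon_pos_F_b X F b)))
           (euclidean :: ereal topology)
           (\<lambda>(x, \<nu>). potential \<kappa> x \<nu>)"
proof -
  note kernel = lc haus cont_off real_of_ereal_kernel_decay[OF inf_X] F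
  have pot: "potential \<kappa> x \<nu> =
      ereal (integral\<^sup>L \<nu> (\<lambda>y. if y \<in> F then real_of_ereal (\<kappa> x y) else 0))"
    if x: "x \<in> Q" and \<nu>: "\<nu> \<in> radon_pos_F_b X F b" for x \<nu>
  proof (rule potential_eq_integral_on)
    show "AE y in \<nu>. y \<in> F" using radon_pos_F_bD(4)[OF \<nu> F less_imp_le[OF b]] .
    show "\<bar>\<kappa> x y\<bar> \<noteq> \<infinity>" if "y \<in> F" for y
      using x that Q(2) closedin_subset[OF F] by (intro finite_off[rule_format]) auto
    have "x \<in> topspace X" "x \<notin> F" using x Q(2) by blast+
    then obtain U \<psi> where "openin X U" "x \<in> U" "\<psi> \<in> Cc X"
      and approx: "\<And>x' \<nu>'. x' \<in> U \<Longrightarrow> \<nu>' \<in> radon_pos_F_b X F b \<Longrightarrow>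
        integrable \<nu>' (\<lambda>y. if y \<in> F then real_of_ereal (\<kappa> x' y) else 0) \<and>
        \<bar>integral\<^sup>L \<nu>' (\<lambda>y. if y \<in> F then real_of_ereal (\<kappa> x' y) else 0) - integral\<^sup>L \<nu>' \<psi>\<bar> \<le> 1"
      by (rule integral_kernel_approx_by_Cc[OF kernel _ _ zero_less_one b]) (rule that)
    then show "integrable \<nu> (\<lambda>y. if y \<in> F then real_of_ereal (\<kappa> x y) else 0)"
      using \<nu> by blast
  qed
  have "continuous_map euclideanreal (euclidean :: ereal topology) ereal"
    by (simp add: continuous_on_ereal continuous_on_id)
  with continuous_map_integral_kernel[OF kernel Q(2) b] have "continuous_map
      (prod_topology (subtopology X Q) (vague_topology X (radon_pos_F_b X F b))) euclidean
      (ereal \<circ> (\<lambda>(x, \<nu>). integral\<^sup>L \<nu> (\<lambda>y. if y \<in> F then real_of_ereal (\<kappa> x y) else 0)))"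
    by (rule continuous_map_compose)
  then show ?thesis
    by (rule continuous_map_eq) (auto simp: topspace_vague_topology pot)
qed

end
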